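(* Let $\mathcal G'_3$, $\tau$, $\mathcal G'_6$ and $\mathcal B$ be as in the context. There is a first-order sentence $\psi$ in the signature $\Gamma_6\cup\{<\}$ which is $(\mathcal G'_6,\mathcal B)$-invariant and such that for every $(G,x,y,z)\in\mathcal G'_3$: if $x,y,z$ lie in one connected component and $d(x,y)=d(x,z)$, then $G^\tau\models(\mathfrak B<)\psi$; if $x,y,z$ do not all lie in one connected component, or $|d(x,y)-d(x,z)|\ge 2$, then $G^\tau\models\neg(\mathfrak B<)\psi$.
   Context: Graphs are finite and undirected; $d$ denotes graph distance. A linear order $<$ of the vertex set of a graph, listing vertices $v_1<\dots<v_n$, is a breadth-first traversal (BFT) if for each $i\ge2$, whenever some $v_j$ with $j<i$ has a neighbour outside $\{v_1,\dots,v_{i-1}\}$, $v_i$ is adjacent to $v_{j^*}$ for the least such $j^*$ (i.e. $<$ is a visiting order of breadth-first search). Equivalently: for all $u<v<w$, $uEw$ implies some $x<v$ with $x\le u$ has $xEv$. $\Gamma_n$ is the signature with a binary relation symbol $E$ and $n$ constant symbols; an $n$-pointed graph is a graph with $n$ distinguished vertices. $\mathcal G'_3$ is the family of finite 3-pointed graphs $(G,x,y,z)$ such that, if $x,y,z$ lie in the same connected component, then $|d(x,y)-d(x,z)|\neq 1$. For a 3-pointed graph $(G,x,y,z)$, $G^\tau$ is the 6-pointed graph obtained from two disjoint copies $G_1,G_2$ of $G$ (each with edges inherited from $G$) by adding a single edge between $x_1$ and $x_2$, where $x_i,y_i,z_i$ denote the copies of $x,y,z$ in $G_i$; its constants are $x_1,y_1,z_1,x_2,y_2,z_2$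 (this is given by a 2-dimensional quantifier-free interpretation $\tau:\Gamma_6\to\Gamma_3$). $\mathcal G'_6=\{G^\tau: G\in\mathcal G'_3\}$, and $\mathcal B$ is the family of all expansions $(H,<)$ with $H\in\mathcal G'_6$ and $<$ a BFT of $H$. A $\Gamma_6\cup\{<\}$-sentence $\psi$ is $(\mathcal G'_6,\mathcal B)$-invariant if $(H,<)\models\psi\iff(H',<')\models\psi$ for all $(H,<),(H',<')\in\mathcal B$ with $H\cong H'$. For such $\psi$ and $H\in\mathcal G'_6$, $H\models(\mathfrak B<)\psi$ means $(H,<)\models\psi$ for some (equivalently every) BFT $<$ of $H$. *)

theory Defs
  imports Main
begin

text \<open>Terms: variables (indexed by nat) and constant symbols c_0,...,c_5
  (only indices below 6 are allowed in sentences).\<close>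
datatype fo_term = Var nat | Cst nat

datatype fo =
    Eq fo_term fo_term
  | Edge fo_term fo_term
  | Less fo_term fo_term
  | Neg fo
  | Conj fo fo
  | Disj fo fo
  | Ex nat fo
  | All nat fo

fun fv_term :: "fo_term \<Rightarrow> nat set" where
  "fv_term (Var n) = {n}"
| "fv_term (Cst k) = {}"

fun cs_term :: "fo_term \<Rightarrow> nat set" where
  "cs_term (Var n) = {}"
| "cs_term (Cst k) = {k}"

fun fv :: "fo \<Rightarrow> nat set" where
  "fv (Eq s t) = fv_term s \<union> fv_term t"
| "fv (Edge s t) = fv_term s \<union> fv_term t"
| "fv (Less s t) = fv_term s \<union> fv_term t"
| "fv (Neg p) = fv p"
| "fv (Conj p q) = fv p \<union> fv q"
| "fv (Disj p q) = fv p \<union> fv q"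
| "fv (Ex x p) = fv p - {x}"
| "fv (All x p) = fv p - {x}"

fun consts_of :: "fo \<Rightarrow> nat set" where
  "consts_of (Eq s t) = cs_term s \<union> cs_term t"
| "consts_of (Edge s t) = cs_term s \<union> cs_term t"
| "consts_of (Less s t) = cs_term s \<union> cs_term t"
| "consts_of (Neg p) = consts_of p"
| "consts_of (Conj p q) = consts_of p \<union> consts_of q"
| "consts_of (Disj p q) = consts_of p \<union> consts_of q"
| "consts_of (Ex x p) = consts_of p"
| "consts_of (All x p) = consts_of p"

definition sentence6 :: "fo \<Rightarrow> bool" where
  "sentence6 p \<longleftrightarrow> fv p = {} \<and> consts_of p \<subseteq> {..<6}"

fun eval_term :: "(nat \<Rightarrow> 'v) \<Rightarrow> (nat \<Rightarrow> 'v) \<Rightarrow> fo_term \<Rightarrow> 'v" where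
  "eval_term c \<rho> (Var n) = \<rho> n"
| "eval_term c \<rho> (Cst k) = c k"

fun sat :: "'v set \<Rightarrow> ('v \<Rightarrow> 'v \<Rightarrow> bool) \<Rightarrow> ('v \<Rightarrow> 'v \<Rightarrow> bool) \<Rightarrow> (nat \<Rightarrow> 'v)
            \<Rightarrow> (nat \<Rightarrow> 'v) \<Rightarrow> fo \<Rightarrow> bool" where
  "sat V E L c \<rho> (Eq s t) = (eval_term c \<rho> s = eval_term c \<rho> t)"
| "sat V E L c \<rho> (Edge s t) = E (eval_term c \<rho> s) (eval_term c \<rho> t)"
| "sat V E L c \<rho> (Less s t) = L (eval_term c \<rho> s) (eval_term c \<rho> t)"
| "sat V E L c \<rho> (Neg p) = (\<not> sat V E L c \<rho> p)"
| "sat V E L c \<rho> (Conj p q) = (sat V E L c \<rho> p \<and> sat V E L c \<rho> q)"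
| "sat V E L c \<rho> (Disj p q) = (sat V E L c \<rho> p \<or> sat V E L c \<rho> q)"
| "sat V E L c \<rho> (Ex x p) = (\<exists>v\<in>V. sat V E L c (\<rho>(x := v)) p)"
| "sat V E L c \<rho> (All x p) = (\<forall>v\<in>V. sat V E L c (\<rho>(x := v)) p)"

text \<open>Truth of a sentence (assignment irrelevant; we fix one arbitrary assignment into V).\<close>
definition models :: "'v set \<Rightarrow> ('v \<Rightarrow> 'v \<Rightarrow> bool) \<Rightarrow> ('v \<Rightarrow> 'v \<Rightarrow> bool) \<Rightarrow> (nat \<Rightarrow> 'v)
                     \<Rightarrow> fo \<Rightarrow> bool" where
  "models V E L c p \<longleftrightarrow> sat V E L c (\<lambda>_. SOME v. v \<in> V) p"

definition graph :: "'v set \<Rightarrow> ('v \<Rightarrow> 'v \<Rightarrow> bool) \<Rightarrow> bool" where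
  "graph V E \<longleftrightarrow> finite V \<and> (\<forall>u v. E u v \<longrightarrow> u \<in> V \<and> v \<in> V)
                 \<and> (\<forall>u v. E u v \<longrightarrow> E v u) \<and> (\<forall>u. \<not> E u u)"

definition walk_rel :: "('v \<Rightarrow> 'v \<Rightarrow> bool) \<Rightarrow> ('v \<times> 'v) set" where
  "walk_rel E = {(u, v). E u v}"

definition connected :: "('v \<Rightarrow> 'v \<Rightarrow> bool) \<Rightarrow> 'v \<Rightarrow> 'v \<Rightarrow> bool" where
  "connected E u v \<longleftrightarrow> (u, v) \<in> (walk_rel E)\<^sup>*"

text \<open>Graph distance: length of a shortest walk (only meaningful when connected).\<close>
definition dist :: "('v \<Rightarrow> 'v \<Rightarrow> bool) \<Rightarrow> 'v \<Rightarrow> 'v \<Rightarrow> nat" where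
  "dist E u v = (LEAST n. (u, v) \<in> (walk_rel E) ^^ n)"

definition same_comp3 :: "('v \<Rightarrow> 'v \<Rightarrow> bool) \<Rightarrow> 'v \<Rightarrow> 'v \<Rightarrow> 'v \<Rightarrow> bool" where
  "same_comp3 E x y z \<longleftrightarrow> connected E x y \<and> connected E x z"

text \<open>The family G'_3 (vertices taken from nat; every finite graph is isomorphic to one).\<close>
definition G3' :: "nat set \<Rightarrow> (nat \<Rightarrow> nat \<Rightarrow> bool) \<Rightarrow> nat \<Rightarrow> nat \<Rightarrow> nat \<Rightarrow> bool" where
  "G3' V E x y z \<longleftrightarrow> graph V E \<and> x \<in> V \<and> y \<in> V \<and> z \<in> V
     \<and> (same_comp3 E x y z \<longrightarrow> \<bar>int (dist E x y) - int (dist E x z)\<bar> \<noteq> 1)"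

text \<open>Copy i of vertex v is (v, b) with b = False for copy 1 and b = True for copy 2.\<close>
definition tauV :: "'v set \<Rightarrow> ('v \<times> bool) set" where
  "tauV V = V \<times> UNIV"

definition tauE :: "('v \<Rightarrow> 'v \<Rightarrow> bool) \<Rightarrow> 'v \<Rightarrow> ('v \<times> bool) \<Rightarrow> ('v \<times> bool) \<Rightarrow> bool" where
  "tauE E x p q \<longleftrightarrow> (snd p = snd q \<and> E (fst p) (fst q))
                   \<or> (fst p = x \<and> fst q = x \<and> snd p \<noteq> snd q)"

text \<open>Constants of G^tau: c_0,c_1,c_2 = x_1,y_1,z_1 and c_3,c_4,c_5 = x_2,y_2,z_2.\<close>
definition tauC :: "'v \<Rightarrow> 'v \<Rightarrow> 'v \<Rightarrow> nat \<Rightarrow> ('v \<times> bool)" where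
  "tauC x y z k = (if k = 0 then (x, False) else if k = 1 then (y, False)
                  else if k = 2 then (z, False) else if k = 3 then (x, True)
                  else if k = 4 then (y, True) else (z, True))"

definition strict_linorder_on :: "'v set \<Rightarrow> ('v \<Rightarrow> 'v \<Rightarrow> bool) \<Rightarrow> bool" where
  "strict_linorder_on V L \<longleftrightarrow> (\<forall>u v. L u v \<longrightarrow> u \<in> V \<and> v \<in> V)
     \<and> (\<forall>u. \<not> L u u) \<and> (\<forall>u v w. L u v \<longrightarrow> L v w \<longrightarrow> L u w)
     \<and> (\<forall>u\<in>V. \<forall>v\<in>V. u = v \<or> L u v \<or> L v u)"

definition bft :: "'v set \<Rightarrow> ('v \<Rightarrow> 'v \<Rightarrow> bool) \<Rightarrow> ('v \<Rightarrow> 'v \<Rightarrow> bool) \<Rightarrow> bool" where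
  "bft V E L \<longleftrightarrow> strict_linorder_on V L \<and>
     (\<forall>v\<in>V. \<forall>u\<in>V.
        (L u v \<and> (\<exists>w\<in>V. E u w \<and> \<not> L w v)
          \<and> (\<forall>u'\<in>V. L u' u \<longrightarrow> \<not> (\<exists>w\<in>V. E u' w \<and> \<not> L w v)))
        \<longrightarrow> E u v)"

definition iso6 :: "'v set \<Rightarrow> ('v \<Rightarrow> 'v \<Rightarrow> bool) \<Rightarrow> (nat \<Rightarrow> 'v)
                    \<Rightarrow> 'w set \<Rightarrow> ('w \<Rightarrow> 'w \<Rightarrow> bool) \<Rightarrow> (nat \<Rightarrow> 'w) \<Rightarrow> bool" where
  "iso6 V E c V' E' c' \<longleftrightarrow> (\<exists>f. bij_betw f V V'
      \<and> (\<forall>u\<in>V. \<forall>v\<in>V. E u v \<longleftrightarrow> E' (f u) (f v))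
      \<and> (\<forall>k<6. f (c k) = c' k))"

definition B_invariant :: "fo \<Rightarrow> bool" where
  "B_invariant p \<longleftrightarrow>
    (\<forall>V E x y z V' E' x' y' z' L L'.
       G3' V E x y z \<longrightarrow> G3' V' E' x' y' z' \<longrightarrow>
       bft (tauV V) (tauE E x) L \<longrightarrow> bft (tauV V') (tauE E' x') L' \<longrightarrow>
       iso6 (tauV V) (tauE E x) (tauC x y z) (tauV V') (tauE E' x') (tauC x' y' z') \<longrightarrow>
       (models (tauV V) (tauE E x) L (tauC x y z) p
         \<longleftrightarrow> models (tauV V') (tauE E' x') L' (tauC x' y' z') p))"

text \<open>G^tau |= (B<) psi: some BFT of G^tau makes psi true.\<close>
definition tau_models_B :: "nat set \<Rightarrow> (nat \<Rightarrow> nat \<Rightarrow> bool) \<Rightarrow> nat \<Rightarrow> nat \<Rightarrow> nat \<Rightarrow> fo \<Rightarrow> bool" where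
  "tau_models_B V E x y z p \<longleftrightarrow>
     (\<exists>L. bft (tauV V) (tauE E x) L \<and> models (tauV V) (tauE E x) L (tauC x y z) p)"

end

theory Submission
  imports Defs
begin

(* In a breadth-first traversal the vertices without an earlier neighbour are exactly the
   first vertices of the connected components, so connectivity is definable from the order.
   Within a component the order is monotone in the distance from its first vertex; hence two
   vertices whose levels do not differ by exactly one lie on the same level iff the later one
   has a neighbour preceding the earlier one.  In G^tau the copy of x that is visited second
   is entered through the bridge edge, so levels in that copy are the distances from x shifted
   by a constant.  The sentence says that in the copy of x visited second, y and z are in the
   component of x and on the same level. *)

lemma walk_rel_iff [simp]: "(u, v) \<in> walk_rel E \<longleftrightarrow> E u v"
  by (simp add: walk_rel_def)

lemma connected_refl [simp]: "connected E u u"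
  by (simp add: connected_def)

lemma connected_trans: "connected E u v \<Longrightarrow> connected E v w \<Longrightarrow> connected E u w"
  unfolding connected_def by simp

lemma connected_edge: "connected E u v \<Longrightarrow> E v w \<Longrightarrow> connected E u w"
  unfolding connected_def by (simp add: rtrancl.rtrancl_into_rtrancl)

lemma connected_if_relpow: "(u, v) \<in> walk_rel E ^^ n \<Longrightarrow> connected E u v"
  unfolding connected_def using relpow_imp_rtrancl by blast

lemma relpow_walk_rel_sym:
  assumes "symp E"
  shows "(u, v) \<in> walk_rel E ^^ n \<Longrightarrow> (v, u) \<in> walk_rel E ^^ n"
proof (induction n arbitrary: v)
  case (Suc n)
  then obtain w where "(u, w) \<in> walk_rel E ^^ n" "E w v" by auto
  then have "(v, w) \<in> walk_rel E" "(w, u) \<in> walk_rel E ^^ n"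
    using Suc.IH assms by (auto dest: sympD)
  then show ?case by (rule relpow_Suc_I2)
qed simp

lemma connected_sym: "symp E \<Longrightarrow> connected E u v \<Longrightarrow> connected E v u"
  unfolding connected_def rtrancl_power by (auto dest: relpow_walk_rel_sym)

lemma dist_relpow: "connected E u v \<Longrightarrow> (u, v) \<in> walk_rel E ^^ dist E u v"
  unfolding connected_def dist_def by (metis LeastI_ex rtrancl_power)

lemma dist_le_relpow: "(u, v) \<in> walk_rel E ^^ n \<Longrightarrow> dist E u v \<le> n"
  by (simp add: dist_def Least_le)

lemma dist_self [simp]: "dist E u u = 0"
  by (metis dist_le_relpow le_zero_eq relpow_0_I)

lemma dist_eq_0D: "connected E u v \<Longrightarrow> dist E u v = 0 \<Longrightarrow> u = v"
  using dist_relpow[of E u v] by simp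

lemma dist_sym:
  assumes "symp E"
  shows "dist E v u = dist E u v"
proof -
  have "(v, u) \<in> walk_rel E ^^ n \<longleftrightarrow> (u, v) \<in> walk_rel E ^^ n" for n
    using relpow_walk_rel_sym[OF assms] by blast
  then show ?thesis by (simp add: dist_def)
qed

lemma dist_edge:
  assumes "connected E u v" "E v w"
  shows "dist E u w \<le> dist E u v + 1"
proof -
  have "(u, w) \<in> walk_rel E ^^ Suc (dist E u v)"
    using relpow_Suc_I[OF dist_relpow[OF assms(1)], of w] assms(2) by simp
  then show ?thesis by (simp add: dist_le_relpow)
qed

lemma dist_triangle:
  "connected E u w \<Longrightarrow> connected E w v \<Longrightarrow> dist E u v \<le> dist E u w + dist E w v"
  using dist_relpow[of E u w] dist_relpow[of E w v]
  by (intro dist_le_relpow) (auto simp: relpow_add)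

lemma dist_last_edge:
  assumes "connected E u v" "dist E u v = Suc n"
  obtains w where "E w v" "connected E u w" "dist E u w = n"
proof -
  obtain w where w: "(u, w) \<in> walk_rel E ^^ n" "E w v"
    using dist_relpow[OF assms(1)] assms(2) by auto
  have uw: "connected E u w" using w(1) by (rule connected_if_relpow)
  moreover have "dist E u w = n"
    using dist_le_relpow[OF w(1)] dist_edge[OF uw w(2)] assms(2) by linarith
  ultimately show thesis using that w(2) by blast
qed

lemma dist_lower_bound:
  fixes f :: "'v \<Rightarrow> int"
  assumes step: "\<And>p q. P p \<Longrightarrow> E p q \<Longrightarrow> P q \<and> f q \<le> f p + 1"
    and "P u" "connected E u v"
  shows "f v \<le> f u + int (dist E u v)"
proof -
  have "P w \<and> f w \<le> f u + int n" if "(u, w) \<in> walk_rel E ^^ n" for n w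
    using that
  proof (induction n arbitrary: w)
    case (Suc n)
    then obtain p where p: "(u, p) \<in> walk_rel E ^^ n" "E p w" by auto
    from Suc.IH[OF p(1)] have "P p" "f p \<le> f u + int n" by auto
    with step[OF _ p(2)] show ?case by force
  qed (use \<open>P u\<close> in simp)
  then show ?thesis using dist_relpow[OF assms(3)] by blast
qed

lemma strict_linorder_on_min:
  assumes "strict_linorder_on W L" "finite S" "s \<in> S"
  obtains m where "m \<in> S" "\<And>s. s \<in> S \<Longrightarrow> \<not> L s m"
proof -
  let ?R = "{(a, b). a \<in> S \<and> b \<in> S \<and> L a b}"
  have "wf ?R"
  proof (rule finite_acyclic_wf)
    show "finite ?R" by (rule finite_subset[of _ "S \<times> S"]) (use assms(2) in auto)
    have "trans ?R" "irrefl ?R"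
      using assms(1) unfolding strict_linorder_on_def trans_def irrefl_def by blast+
    then show "acyclic ?R" by (simp add: acyclic_irrefl)
  qed
  then obtain m where "m \<in> S" "\<And>y. (y, m) \<in> ?R \<Longrightarrow> y \<notin> S"
    by (rule wfE_min[OF _ assms(3)]) blast
  then show thesis using that by blast
qed

definition bfs_root ::
  "'v set \<Rightarrow> ('v \<Rightarrow> 'v \<Rightarrow> bool) \<Rightarrow> ('v \<Rightarrow> 'v \<Rightarrow> bool) \<Rightarrow> 'v \<Rightarrow> bool" where
  "bfs_root W F L v \<longleftrightarrow> \<not> (\<exists>w\<in>W. F w v \<and> L w v)"

definition bfs_connected ::
  "'v set \<Rightarrow> ('v \<Rightarrow> 'v \<Rightarrow> bool) \<Rightarrow> ('v \<Rightarrow> 'v \<Rightarrow> bool) \<Rightarrow> 'v \<Rightarrow> 'v \<Rightarrow> bool" where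
  "bfs_connected W F L a b \<longleftrightarrow> \<not> (\<exists>m\<in>W. bfs_root W F L m \<and>
      ((L a m \<and> (L m b \<or> m = b)) \<or> (L b m \<and> (L m a \<or> m = a))))"

definition bfs_same_level ::
  "'v set \<Rightarrow> ('v \<Rightarrow> 'v \<Rightarrow> bool) \<Rightarrow> ('v \<Rightarrow> 'v \<Rightarrow> bool) \<Rightarrow> 'v \<Rightarrow> 'v \<Rightarrow> bool" where
  "bfs_same_level W F L a b \<longleftrightarrow> a = b \<or> (L a b \<and> (\<exists>w\<in>W. F w b \<and> L w a))
      \<or> (L b a \<and> (\<exists>w\<in>W. F w a \<and> L w b))"

lemma bfs_same_level_sym: "bfs_same_level W F L a b \<longleftrightarrow> bfs_same_level W F L b a"
  unfolding bfs_same_level_def by blast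

locale bft_graph =
  fixes W :: "'a set" and F L
  assumes graph: "graph W F" and bft: "bft W F L"
begin

lemma linorder: "strict_linorder_on W L"
  using bft by (simp add: bft_def)

lemma L_in_W: "L u v \<Longrightarrow> u \<in> W \<and> v \<in> W"
  using linorder by (simp add: strict_linorder_on_def)

lemma L_irrefl [simp]: "\<not> L u u"
  using linorder by (simp add: strict_linorder_on_def)

lemma L_trans: "L u v \<Longrightarrow> L v w \<Longrightarrow> L u w"
  using linorder unfolding strict_linorder_on_def by blast

lemma L_asym: "L u v \<Longrightarrow> \<not> L v u"
  using L_trans L_irrefl by blast

lemma L_linear: "u \<in> W \<Longrightarrow> v \<in> W \<Longrightarrow> u = v \<or> L u v \<or> L v u"
  using linorder by (simp add: strict_linorder_on_def)

lemma edge_in_W: "F u v \<Longrightarrow> u \<in> W \<and> v \<in> W"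
  using graph by (simp add: graph_def)

lemma symp_edge: "symp F"
  using graph by (simp add: graph_def symp_def)

lemma edge_sym: "F u v \<Longrightarrow> F v u"
  using symp_edge by (rule sympD)

lemma finite_W: "finite W"
  using graph by (simp add: graph_def)

lemma connected_in_W:
  assumes "u \<in> W" "connected F u v"
  shows "v \<in> W"
  using assms(2) unfolding connected_def
  by (induction rule: rtrancl_induct) (use assms(1) edge_in_W in auto)

text \<open>The BFT condition attaches v to the least earlier vertex that still has a neighbour
  not before v; that vertex is no later than u0.\<close>
lemma parent_le:
  assumes "L u0 v" "F u0 w0" "\<not> L w0 v"
  obtains u where "F u v" "L u v" "u = u0 \<or> L u u0"
proof -
  let ?S = "{u\<in>W. L u v \<and> (\<exists>w\<in>W. F u w \<and> \<not> L w v)}"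
  have u0: "u0 \<in> ?S" using assms edge_in_W L_in_W by blast
  have "finite ?S" using finite_W by simp
  then obtain m where m: "m \<in> ?S" "\<And>s. s \<in> ?S \<Longrightarrow> \<not> L s m"
    using strict_linorder_on_min[OF linorder _ u0] by blast
  have "v \<in> W" using assms(1) L_in_W by blast
  moreover have "\<forall>u'\<in>W. L u' m \<longrightarrow> \<not> (\<exists>w\<in>W. F u' w \<and> \<not> L w v)"
    using m L_trans by blast
  ultimately have "F m v" using bft m(1) unfolding bft_def by blast
  moreover have "m = u0 \<or> L m u0" using m u0 L_linear by blast
  ultimately show thesis using that m(1) by blast
qed

lemma before_root:
  assumes root: "bfs_root W F L v" and "L u v" "connected F u w"
  shows "L w v"
  using assms(3) unfolding connected_def
proof (induction rule: rtrancl_induct)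
  case (step y z)
  show ?case
  proof (rule ccontr)
    assume "\<not> L z v"
    moreover have "F y z" using step.hyps(2) by simp
    ultimately obtain u where "F u v" "L u v"
      using parent_le[OF step.IH] by blast
    then show False using root edge_in_W unfolding bfs_root_def by blast
  qed
qed (rule assms(2))

lemma parent_mono:
  assumes "L b a" "L w a" "F w a" "\<not> bfs_root W F L b"
  obtains u where "F u b" "L u b" "u = w \<or> L u w"
proof (cases "L w b")
  case True
  moreover have "\<not> L a b" using assms(1) L_asym by blast
  ultimately show thesis by (rule parent_le[OF _ assms(3)]) (rule that)
next
  case False
  from assms(4) obtain u where "F u b" "L u b"
    unfolding bfs_root_def by blast
  moreover have "w = b \<or> L b w" using False L_linear L_in_W assms(2) assms(1) by blast
  ultimately show thesis using that L_trans by blast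
qed

end

locale bft_component = bft_graph +
  fixes r
  assumes first_in_W: "r \<in> W"
    and first_in_component: "\<And>v. connected F r v \<Longrightarrow> v = r \<or> L r v"
begin

abbreviation level :: "'a \<Rightarrow> nat" where
  "level v \<equiv> dist F r v"

lemma first_is_root: "bfs_root W F L r"
  unfolding bfs_root_def
proof
  assume "\<exists>w\<in>W. F w r \<and> L w r"
  then obtain w where "F w r" "L w r" by blast
  moreover have "connected F r w"
    using connected_edge[OF connected_refl[of F r] edge_sym[OF \<open>F w r\<close>]] .
  ultimately show False using first_in_component[of w] L_asym by auto
qed

lemma not_root:
  assumes "connected F r b" "b \<noteq> r"
  shows "\<not> bfs_root W F L b"
proof
  assume "bfs_root W F L b"
  moreover have "L r b" using first_in_component assms by blast
  ultimately have "L b b" using before_root assms(1) by blast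
  then show False by simp
qed

lemma less_if_level_less:
  assumes "connected F r a" "connected F r b" "level a < level b"
  shows "L a b"
  using assms
proof (induction "level a" arbitrary: a b)
  case 0
  then have "a = r" "b \<noteq> r" using dist_eq_0D[of F r] by auto
  then show ?case using first_in_component 0 by blast
next
  case (Suc n)
  show ?case
  proof (rule ccontr)
    assume "\<not> L a b"
    moreover have "a \<noteq> b" using Suc by auto
    ultimately have "L b a"
      using L_linear connected_in_W[OF first_in_W] Suc.prems by blast
    obtain w where w: "F w a" "connected F r w" "level w = n"
      using dist_last_edge[OF Suc.prems(1) Suc.hyps(2)[symmetric]] by blast
    have "L w a" using Suc.hyps(1) w Suc.prems(1) Suc.hyps(2) by simp
    have "b \<noteq> r" using Suc by auto
    then obtain u where u: "F u b" "L u b" "u = w \<or> L u w"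
      by (rule parent_mono[OF \<open>L b a\<close> \<open>L w a\<close> w(1) not_root[OF Suc.prems(2)]])
    have ru: "connected F r u" using connected_edge[OF Suc.prems(2) edge_sym[OF u(1)]] .
    moreover have "n < level u"
      using dist_edge[OF ru u(1)] Suc.hyps(2) Suc.prems(3) by linarith
    ultimately have "L w u" using Suc.hyps(1) w by simp
    then show False using u(3) L_asym by auto
  qed
qed

lemma same_level_if_level_eq:
  assumes "connected F r a" "connected F r b" "level a = level b"
  shows "bfs_same_level W F L a b"
proof -
  have ordered: "bfs_same_level W F L a b"
    if ab: "connected F r a" "connected F r b" "level a = level b" "L a b" for a b
  proof -
    have "level b \<noteq> 0"
      using dist_eq_0D[OF ab(1)] dist_eq_0D[OF ab(2)] ab(3,4) by (cases "level b = 0") auto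
    then obtain n where n: "level b = Suc n" using not0_implies_Suc by blast
    obtain w where w: "F w b" "connected F r w" "level w = n"
      by (rule dist_last_edge[OF ab(2) n])
    have "L w a" using less_if_level_less[OF w(2) ab(1)] w n ab(3) by simp
    then show ?thesis unfolding bfs_same_level_def using ab(4) w edge_in_W by blast
  qed
  consider "a = b" | "L a b" | "L b a"
    using L_linear connected_in_W[OF first_in_W] assms(1,2) by blast
  then show ?thesis
    using ordered[of a b] ordered[of b a] assms bfs_same_level_sym
    by cases (auto simp: bfs_same_level_def)
qed

lemma not_same_level_if_level_far:
  assumes "connected F r a" "connected F r b" "level a + 2 \<le> level b"
  shows "\<not> bfs_same_level W F L a b"
proof -
  have "L a b" using less_if_level_less assms by simp
  moreover have "\<not> L w a" if "F w b" for w
  proof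
    assume "L w a"
    have rw: "connected F r w" using connected_edge[OF assms(2) edge_sym[OF that]] .
    have "L a w" using less_if_level_less[OF assms(1) rw] dist_edge[OF rw that] assms(3) by simp
    then show False using \<open>L w a\<close> L_asym by blast
  qed
  ultimately show ?thesis unfolding bfs_same_level_def using L_asym by blast
qed

text \<open>Levels differing by exactly one cannot be told apart from equal levels this way;
  this is why the theorem excludes that case.\<close>
lemma bfs_same_level_iff:
  assumes "connected F r a" "connected F r b" "level a \<noteq> level b + 1" "level b \<noteq> level a + 1"
  shows "bfs_same_level W F L a b \<longleftrightarrow> level a = level b"
proof
  assume "bfs_same_level W F L a b"
  then have "\<not> level a + 2 \<le> level b" "\<not> level b + 2 \<le> level a"
    using not_same_level_if_level_far[OF assms(1,2)] not_same_level_if_level_far[OF assms(2,1)]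
    by (auto simp: bfs_same_level_sym)
  then show "level a = level b" using assms(3,4) by linarith
qed (rule same_level_if_level_eq[OF assms(1,2)])

end

context bft_graph
begin

lemma component_first_exists:
  assumes "a \<in> W"
  obtains r where "bft_component W F L r" "connected F r a"
proof -
  let ?S = "{v\<in>W. connected F a v}"
  have "a \<in> ?S" "finite ?S" using assms finite_W by auto
  then obtain m where m: "m \<in> ?S" "\<And>s. s \<in> ?S \<Longrightarrow> \<not> L s m"
    using strict_linorder_on_min[OF linorder] by blast
  have am: "connected F a m" using m(1) by simp
  have "v = m \<or> L m v" if "connected F m v" for v
  proof -
    have "v \<in> ?S" using connected_trans[OF am that] connected_in_W[OF assms] by blast
    then show ?thesis using m L_linear by blast
  qed
  then have "bft_component W F L m"
    using m(1) by (intro bft_component.intro bft_component_axioms.intro bft_graph_axioms) auto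
  moreover have "connected F m a" using connected_sym[OF symp_edge am] .
  ultimately show thesis by (rule that)
qed

lemma root_between:
  assumes "p \<in> W" "q \<in> W" "L p q" "\<not> connected F p q"
  obtains m where "m \<in> W" "bfs_root W F L m" "L p m" "L m q \<or> m = q"
proof -
  obtain r where r: "bft_component W F L r" "connected F r q"
    using component_first_exists[OF assms(2)] .
  obtain r' where r': "bft_component W F L r'" "connected F r' p"
    using component_first_exists[OF assms(1)] .
  have roots: "bfs_root W F L r" "bfs_root W F L r'"
    using bft_component.first_is_root[OF r(1)] bft_component.first_is_root[OF r'(1)] .
  have W: "r \<in> W" "r' \<in> W"
    using bft_component.first_in_W[OF r(1)] bft_component.first_in_W[OF r'(1)] .
  have rq: "q = r \<or> L r q" using bft_component.first_in_component[OF r] .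
  have r'p: "p = r' \<or> L r' p" using bft_component.first_in_component[OF r'] .
  have "L p r"
  proof (rule ccontr)
    assume "\<not> L p r"
    moreover have "r \<noteq> p" using r(2) assms(4) by blast
    ultimately have "L r p" using L_linear W(1) assms(1) by blast
    consider "L r r'" | "r = r'" | "L r' r" using L_linear W by blast
    then show False
    proof cases
      case 1
      then have "L q r'" using before_root[OF roots(2) _ r(2)] by blast
      then show False using r'p assms(3) L_trans L_asym by blast
    next
      case 2
      then show False
        using connected_trans[OF connected_sym[OF symp_edge r'(2)]] r(2) assms(4) by simp
    next
      case 3
      then show False using before_root[OF roots(1) _ r'(2)] \<open>L r p\<close> L_asym by blast
    qed
  qed
  then show thesis using that roots(1) W(1) rq by blast
qed

lemma bfs_connected_iff:
  assumes "a \<in> W" "b \<in> W"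
  shows "bfs_connected W F L a b \<longleftrightarrow> connected F a b"
proof
  assume ab: "connected F a b"
  have ba: "connected F b a" using connected_sym[OF symp_edge ab] .
  show "bfs_connected W F L a b"
    unfolding bfs_connected_def
    using before_root[OF _ _ ab] before_root[OF _ _ ba] L_asym by blast
next
  assume conn: "bfs_connected W F L a b"
  show "connected F a b"
  proof (rule ccontr)
    assume not_ab: "\<not> connected F a b"
    then have not_ba: "\<not> connected F b a" using connected_sym[OF symp_edge] by blast
    have "a \<noteq> b" using not_ab by auto
    then consider "L a b" | "L b a" using L_linear assms by blast
    then show False
    proof cases
      case 1
      with root_between[OF assms 1 not_ab] conn show False
        unfolding bfs_connected_def by blast
    next
      case 2
      with root_between[OF assms(2,1) 2 not_ba] conn show False
        unfolding bfs_connected_def by blast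
    qed
  qed
qed

end

lemma graph_tau: "graph V E \<Longrightarrow> x \<in> V \<Longrightarrow> graph (tauV V) (tauE E x)"
  unfolding graph_def tauV_def tauE_def by auto

lemma tauE_bridge: "tauE E x (x, b) (x, \<not> b)"
  by (simp add: tauE_def)

lemma relpow_tau_lift:
  "(u, v) \<in> walk_rel E ^^ n \<Longrightarrow> ((u, b), (v, b)) \<in> walk_rel (tauE E x) ^^ n"
proof (induction n arbitrary: v)
  case (Suc n)
  then obtain w where "(u, w) \<in> walk_rel E ^^ n" "E w v" by auto
  moreover have "tauE E x (w, b) (v, b)" using \<open>E w v\<close> by (simp add: tauE_def)
  ultimately show ?case using Suc.IH by (meson relpow_Suc_I walk_rel_iff)
qed simp

lemma connected_tau_lift: "connected E u v \<Longrightarrow> connected (tauE E x) (u, b) (v, b)"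
  using relpow_tau_lift dist_relpow connected_if_relpow by metis

lemma dist_tau_lift_le: "connected E u v \<Longrightarrow> dist (tauE E x) (u, b) (v, b) \<le> dist E u v"
  using relpow_tau_lift dist_relpow dist_le_relpow by metis

lemma connected_tau_copies: "connected (tauE E x) (x, b) (x, b')"
proof (cases "b' = b")
  case False
  then show ?thesis
    using connected_edge[OF connected_refl[of "tauE E x" "(x, b)"] tauE_bridge[of E x b]] by simp
qed simp

lemma connected_tau_proj:
  assumes "connected (tauE E x) p q" "connected E x (fst p)"
  shows "connected E x (fst q)"
  using assms unfolding connected_def[of "tauE E x"]
  by (induction rule: rtrancl_induct) (auto simp: tauE_def intro: connected_edge)

text \<open>The other copy is entered only through the bridge.  For the lower bound, the potential
  D - d(x, v) on copy c and D + 1 + d(x, v) on the other copy grows by at most one along edges.\<close>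
lemma dist_tau_other_copy:
  fixes c :: bool
  assumes "symp E" "connected E x r" "connected E x v"
  defines "D \<equiv> dist (tauE E x) (r, c) (x, c)"
  shows "dist (tauE E x) (r, c) (v, \<not> c) = D + 1 + dist E x v"
proof (rule antisym)
  let ?H = "tauE E x"
  have rx: "connected ?H (r, c) (x, c)"
    using connected_tau_lift[OF connected_sym[OF assms(1,2)]] .
  have "dist ?H (r, c) (x, \<not> c) \<le> D + 1"
    unfolding D_def using dist_edge[OF rx tauE_bridge] .
  moreover have
    "dist ?H (r, c) (v, \<not> c) \<le> dist ?H (r, c) (x, \<not> c) + dist ?H (x, \<not> c) (v, \<not> c)"
    using dist_triangle[OF connected_trans[OF rx connected_tau_copies]
        connected_tau_lift[OF assms(3)]] .
  ultimately show "dist ?H (r, c) (v, \<not> c) \<le> D + 1 + dist E x v"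
    using dist_tau_lift_le[OF assms(3), of x "\<not> c"] by linarith
next
  let ?H = "tauE E x"
  define f where "f p = (if snd p = c then int D - int (dist E x (fst p))
                         else int D + 1 + int (dist E x (fst p)))" for p
  have step: "connected E x (fst q) \<and> f q \<le> f p + 1"
    if "connected E x (fst p)" "?H p q" for p q
  proof -
    have q: "connected E x (fst q)" using connected_tau_proj[of E x p q] that
      by (simp add: connected_def r_into_rtrancl)
    show ?thesis
    proof (cases "snd p = snd q \<and> E (fst p) (fst q)")
      case True
      then show ?thesis
        using q dist_edge[OF that(1), of "fst q"] dist_edge[OF q, of "fst p"] sympD[OF assms(1)]
        unfolding f_def by auto
    next
      case False
      then show ?thesis using that(2) unfolding f_def tauE_def by auto
    qed
  qed
  have "D \<le> dist E r x"
    unfolding D_def using dist_tau_lift_le[OF connected_sym[OF assms(1,2)]] .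
  then have "f (r, c) \<le> 0" using dist_sym[OF assms(1), of x r] unfolding f_def by simp
  moreover have "connected ?H (r, c) (v, \<not> c)"
    using connected_trans[OF connected_tau_lift[OF connected_sym[OF assms(1,2)]]
        connected_trans[OF connected_tau_copies connected_tau_lift[OF assms(3)]]] .
  ultimately have "f (v, \<not> c) \<le> int (dist ?H (r, c) (v, \<not> c))"
    using dist_lower_bound[of "\<lambda>p. connected E x (fst p)" ?H f, OF step] assms(2) by fastforce
  then show "D + 1 + dist E x v \<le> dist ?H (r, c) (v, \<not> c)" unfolding f_def by simp
qed

lemma tau_bft_later_copy:
  assumes "graph V E" "x \<in> V" "bft (tauV V) (tauE E x) L"
  obtains c where "L (x, c) (x, \<not> c)"
    and "\<And>v w. connected E x v \<Longrightarrow> connected E x w \<Longrightarrow>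
          dist E x v \<noteq> dist E x w + 1 \<Longrightarrow> dist E x w \<noteq> dist E x v + 1 \<Longrightarrow>
          bfs_same_level (tauV V) (tauE E x) L (v, \<not> c) (w, \<not> c) \<longleftrightarrow> dist E x v = dist E x w"
proof -
  let ?H = "tauE E x"
  interpret bft_graph "tauV V" ?H L
    using graph_tau[OF assms(1,2)] assms(3) by unfold_locales
  have symp: "symp E" using assms(1) by (simp add: graph_def symp_def)
  obtain r where "bft_component (tauV V) ?H L r" and rx: "connected ?H r (x, False)"
    using component_first_exists[of "(x, False)"] assms(2) by (auto simp: tauV_def)
  then interpret bft_component "tauV V" ?H L r by simp
  obtain r0 c where r: "r = (r0, c)" by (cases r)
  have "connected E x r0"
    using connected_tau_proj[OF connected_sym[OF symp_edge rx]] r by simp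
  then have level: "level (v, \<not> c) = level (x, c) + 1 + dist E x v" if "connected E x v" for v
    using dist_tau_other_copy[OF symp _ that] r by simp
  have conn: "connected ?H r (v, b)" if "connected E x v" for v b
    using connected_trans[OF connected_trans[OF rx connected_tau_copies]
        connected_tau_lift[OF that]] .
  have "L (x, c) (x, \<not> c)"
    using less_if_level_less[OF conn conn] level[of x] by simp
  moreover have "bfs_same_level (tauV V) ?H L (v, \<not> c) (w, \<not> c) \<longleftrightarrow> dist E x v = dist E x w"
    if "connected E x v" "connected E x w"
      "dist E x v \<noteq> dist E x w + 1" "dist E x w \<noteq> dist E x v + 1" for v w
    using bfs_same_level_iff[OF conn[OF that(1)] conn[OF that(2)]] level that by simp
  ultimately show thesis by (rule that)
qed

definition equidistant_after ::
  "'v set \<Rightarrow> ('v \<Rightarrow> 'v \<Rightarrow> bool) \<Rightarrow> ('v \<Rightarrow> 'v \<Rightarrow> bool) \<Rightarrow> 'v \<Rightarrow> 'v \<Rightarrow> 'v \<Rightarrow> 'v \<Rightarrow> bool" where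
  "equidistant_after W F L x' x y z \<longleftrightarrow> L x' x \<and> bfs_connected W F L x y
     \<and> bfs_connected W F L x z \<and> bfs_same_level W F L y z"

definition tau_equidistant ::
  "'v set \<Rightarrow> ('v \<Rightarrow> 'v \<Rightarrow> bool) \<Rightarrow> ('v \<Rightarrow> 'v \<Rightarrow> bool) \<Rightarrow> (nat \<Rightarrow> 'v) \<Rightarrow> bool" where
  "tau_equidistant W F L c \<longleftrightarrow> equidistant_after W F L (c 0) (c 3) (c 4) (c 5)
     \<or> equidistant_after W F L (c 3) (c 0) (c 1) (c 2)"

lemma tau_equidistant_iff:
  assumes G: "G3' V E x y z" and L: "bft (tauV V) (tauE E x) L"
  shows "tau_equidistant (tauV V) (tauE E x) L (tauC x y z)
    \<longleftrightarrow> same_comp3 E x y z \<and> dist E x y = dist E x z"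
proof -
  let ?H = "tauE E x"
  define eq where
    "eq b \<longleftrightarrow> equidistant_after (tauV V) ?H L (x, \<not> b) (x, b) (y, b) (z, b)" for b
  have V: "graph V E" "x \<in> V" "y \<in> V" "z \<in> V" using G by (auto simp: G3'_def)
  interpret bft_graph "tauV V" ?H L using graph_tau[OF V(1,2)] L by unfold_locales
  have tau: "tau_equidistant (tauV V) ?H L (tauC x y z) \<longleftrightarrow> eq True \<or> eq False"
    unfolding tau_equidistant_def eq_def tauC_def by auto
  have conn: "bfs_connected (tauV V) ?H L (x, b) (v, b) \<longleftrightarrow> connected ?H (x, b) (v, b)"
    if "v \<in> V" for v b
    using bfs_connected_iff that V(2) by (simp add: tauV_def)
  show ?thesis
  proof (cases "same_comp3 E x y z")
    case False
    have "\<not> eq b" for b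
    proof
      assume "eq b"
      then have "connected ?H (x, b) (y, b)" "connected ?H (x, b) (z, b)"
        unfolding eq_def equidistant_after_def using conn V by auto
      then show False
        using False connected_tau_proj[of E x "(x, b)"] unfolding same_comp3_def by fastforce
    qed
    then show ?thesis using tau False by blast
  next
    case True
    then have xy: "connected E x y" and xz: "connected E x z" by (auto simp: same_comp3_def)
    obtain c where c: "L (x, c) (x, \<not> c)"
      and level: "\<And>v w. connected E x v \<Longrightarrow> connected E x w \<Longrightarrow>
          dist E x v \<noteq> dist E x w + 1 \<Longrightarrow> dist E x w \<noteq> dist E x v + 1 \<Longrightarrow>
          bfs_same_level (tauV V) ?H L (v, \<not> c) (w, \<not> c) \<longleftrightarrow> dist E x v = dist E x w"
      using tau_bft_later_copy[OF V(1,2) L] by blast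
    have "\<not> eq c" using c L_asym unfolding eq_def equidistant_after_def by auto
    moreover have "eq (\<not> c) \<longleftrightarrow> dist E x y = dist E x z"
    proof -
      have "\<bar>int (dist E x y) - int (dist E x z)\<bar> \<noteq> 1" using G True by (simp add: G3'_def)
      then show ?thesis
        using c level[OF xy xz] conn V connected_tau_lift[OF xy] connected_tau_lift[OF xz]
        unfolding eq_def equidistant_after_def by auto
    qed
    ultimately show ?thesis using tau True by (cases c) auto
  qed
qed

text \<open>The formulas below bind the variables 0 and 1 internally; they are only applied
  to constant terms.\<close>

definition le_fo :: "fo_term \<Rightarrow> fo_term \<Rightarrow> fo" where
  "le_fo s t = Disj (Less s t) (Eq s t)"

definition root_fo :: "fo_term \<Rightarrow> fo" where
  "root_fo t = Neg (Ex 1 (Conj (Edge (Var 1) t) (Less (Var 1) t)))"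

definition connected_fo :: "fo_term \<Rightarrow> fo_term \<Rightarrow> fo" where
  "connected_fo a b = Neg (Ex 0 (Conj (root_fo (Var 0))
     (Disj (Conj (Less a (Var 0)) (le_fo (Var 0) b)) (Conj (Less b (Var 0)) (le_fo (Var 0) a)))))"

definition same_level_fo :: "fo_term \<Rightarrow> fo_term \<Rightarrow> fo" where
  "same_level_fo a b = Disj (Eq a b)
     (Disj (Conj (Less a b) (Ex 0 (Conj (Edge (Var 0) b) (Less (Var 0) a))))
       (Conj (Less b a) (Ex 0 (Conj (Edge (Var 0) a) (Less (Var 0) b)))))"

definition equidistant_after_fo :: "fo_term \<Rightarrow> fo_term \<Rightarrow> fo_term \<Rightarrow> fo_term \<Rightarrow> fo" where
  "equidistant_after_fo x' x y z =
     Conj (Less x' x) (Conj (connected_fo x y) (Conj (connected_fo x z) (same_level_fo y z)))"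

definition equidistance_sentence :: fo where
  "equidistance_sentence =
     Disj (equidistant_after_fo (Cst 0) (Cst 3) (Cst 4) (Cst 5))
       (equidistant_after_fo (Cst 3) (Cst 0) (Cst 1) (Cst 2))"

lemmas equidistance_sentence_defs = equidistance_sentence_def equidistant_after_fo_def
  connected_fo_def same_level_fo_def root_fo_def le_fo_def

lemma sentence6_equidistance_sentence: "sentence6 equidistance_sentence"
  by (auto simp: sentence6_def equidistance_sentence_defs)

lemma sat_equidistance_sentence:
  "sat W F L c \<rho> equidistance_sentence \<longleftrightarrow> tau_equidistant W F L c"
  by (simp add: equidistance_sentence_defs tau_equidistant_def equidistant_after_def
      bfs_connected_def bfs_root_def bfs_same_level_def)

definition bft_prefix ::
  "'v set \<Rightarrow> ('v \<Rightarrow> 'v \<Rightarrow> bool) \<Rightarrow> 'v set \<Rightarrow> ('v \<Rightarrow> 'v \<Rightarrow> bool) \<Rightarrow> bool" where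
  "bft_prefix W F S L \<longleftrightarrow> strict_linorder_on S L \<and>
     (\<forall>v\<in>S. \<forall>u\<in>W.
        (L u v \<and> (\<exists>w\<in>W. F u w \<and> \<not> L w v)
          \<and> (\<forall>u'\<in>W. L u' u \<longrightarrow> \<not> (\<exists>w\<in>W. F u' w \<and> \<not> L w v)))
        \<longrightarrow> F u v)"

text \<open>One step of breadth-first search: the next vertex is an unvisited neighbour of the
  earliest vertex that still has one, or an arbitrary unvisited vertex if there is none.\<close>
lemma bft_prefix_extend:
  assumes "graph W F" "S \<subset> W" and prefix: "bft_prefix W F S L"
  obtains v L' where "v \<in> W - S" "bft_prefix W F (insert v S) L'"
proof -
  have lo: "strict_linorder_on S L" using prefix by (simp add: bft_prefix_def)
  have LS: "L a b \<Longrightarrow> a \<in> S \<and> b \<in> S" for a b using lo by (simp add: strict_linorder_on_def)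
  have "finite S" using assms(1,2) finite_subset by (auto simp: graph_def)
  let ?T = "{u\<in>S. \<exists>w\<in>W-S. F u w}"
  obtain v where v: "v \<in> W - S"
    and v_next: "\<And>u. u \<in> ?T \<Longrightarrow> \<forall>s\<in>?T. \<not> L s u \<Longrightarrow> F u v"
  proof (cases "?T = {}")
    case True
    then show ?thesis using that assms(2) by blast
  next
    case False
    then obtain u0 where u0: "u0 \<in> ?T" "\<And>s. s \<in> ?T \<Longrightarrow> \<not> L s u0"
      using strict_linorder_on_min[OF lo, of ?T] \<open>finite S\<close> by auto
    obtain w where "w \<in> W - S" "F u0 w" using u0(1) by blast
    moreover have "u = u0" if "u \<in> ?T" "\<forall>s\<in>?T. \<not> L s u" for u
      using that u0 lo unfolding strict_linorder_on_def by blast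
    ultimately show ?thesis using that by blast
  qed
  define L' where "L' a b \<longleftrightarrow> L a b \<or> (a \<in> S \<and> b = v)" for a b
  have lo': "strict_linorder_on (insert v S) L'"
    using lo v LS unfolding strict_linorder_on_def L'_def by blast
  have "F u v'"
    if v': "v' \<in> insert v S" and u: "u \<in> W" "L' u v'" "\<exists>w\<in>W. F u w \<and> \<not> L' w v'"
      and before: "\<forall>u'\<in>W. L' u' u \<longrightarrow> \<not> (\<exists>w\<in>W. F u' w \<and> \<not> L' w v')" for v' u
  proof (cases "v' = v")
    case False
    then have "v' \<in> S" using v' by simp
    have L'v': "L' a v' \<longleftrightarrow> L a v'" for a using False by (simp add: L'_def)
    have "u \<in> S" using u(2) L'v' LS by blast
    then have L'u: "L' a u \<longleftrightarrow> L a u" for a using v by (auto simp: L'_def)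
    show ?thesis using prefix \<open>v' \<in> S\<close> u before unfolding bft_prefix_def L'v' L'u by blast
  next
    case True
    have "u \<in> S" using u(2) True v LS unfolding L'_def by blast
    have L'v: "L' a v \<longleftrightarrow> a \<in> S" for a using LS v by (auto simp: L'_def)
    have L'u: "L' a u \<longleftrightarrow> L a u" for a using \<open>u \<in> S\<close> v by (auto simp: L'_def)
    have "u \<in> ?T" using u(3) \<open>u \<in> S\<close> unfolding True L'v by blast
    moreover have "\<forall>s\<in>?T. \<not> L s u" using before assms(2) unfolding True L'v L'u by blast
    ultimately show ?thesis using v_next True by blast
  qed
  then have "bft_prefix W F (insert v S) L'" using lo' by (simp add: bft_prefix_def)
  with v show thesis by (rule that)
qed

lemma bft_exists:
  assumes "graph W F"
  obtains L where "bft W F L"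
proof -
  have "finite W" using assms by (simp add: graph_def)
  have "\<exists>S L. S \<subseteq> W \<and> card S = k \<and> bft_prefix W F S L" if "k \<le> card W" for k
    using that
  proof (induction k)
    case 0
    have "bft_prefix W F {} (\<lambda>_ _. False)" by (simp add: bft_prefix_def strict_linorder_on_def)
    then show ?case by auto
  next
    case (Suc k)
    then obtain S L where S: "S \<subseteq> W" "card S = k" "bft_prefix W F S L" by auto
    then have "S \<subset> W" using Suc.prems by auto
    then obtain v L' where "v \<in> W - S" "bft_prefix W F (insert v S) L'"
      using bft_prefix_extend[OF assms _ S(3)] by blast
    moreover have "finite S" using S(1) \<open>finite W\<close> finite_subset by blast
    ultimately show ?case using S by (intro exI[of _ "insert v S"] exI[of _ L']) auto
  qed
  then obtain S L where "S \<subseteq> W" "card S = card W" "bft_prefix W F S L" by blast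
  then have "bft_prefix W F W L" using card_subset_eq[OF \<open>finite W\<close>] by metis
  then show thesis by (intro that[of L]) (simp add: bft_prefix_def bft_def)
qed

lemma eval_term_iso:
  assumes "\<And>k. k \<in> cs_term t \<Longrightarrow> c k \<in> W \<and> c' k = f (c k)" "\<And>n. \<rho> n \<in> W"
  shows "eval_term c' (f \<circ> \<rho>) t = f (eval_term c \<rho> t)" "eval_term c \<rho> t \<in> W"
  using assms by (cases t; simp)+

lemma sat_iso:
  assumes bij: "bij_betw f W W'"
    and F: "\<And>u v. u \<in> W \<Longrightarrow> v \<in> W \<Longrightarrow> F' (f u) (f v) \<longleftrightarrow> F u v"
    and L: "\<And>u v. u \<in> W \<Longrightarrow> v \<in> W \<Longrightarrow> L' (f u) (f v) \<longleftrightarrow> L u v"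
    and "\<And>k. k \<in> consts_of \<phi> \<Longrightarrow> c k \<in> W \<and> c' k = f (c k)" "\<And>n. \<rho> n \<in> W"
  shows "sat W' F' L' c' (f \<circ> \<rho>) \<phi> \<longleftrightarrow> sat W F L c \<rho> \<phi>"
  using assms(4,5)
proof (induction \<phi> arbitrary: \<rho>)
  case (Eq s t)
  then have "eval_term c' (f \<circ> \<rho>) s = f (eval_term c \<rho> s)" "eval_term c \<rho> s \<in> W"
    "eval_term c' (f \<circ> \<rho>) t = f (eval_term c \<rho> t)" "eval_term c \<rho> t \<in> W"
    using eval_term_iso[of s c W c' f \<rho>] eval_term_iso[of t c W c' f \<rho>] by auto
  then show ?case
    using bij_betw_imp_inj_on[OF bij] by (simp only: sat.simps) (metis inj_on_eq_iff)
next
  case (Edge s t)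
  then have "eval_term c' (f \<circ> \<rho>) s = f (eval_term c \<rho> s)" "eval_term c \<rho> s \<in> W"
    "eval_term c' (f \<circ> \<rho>) t = f (eval_term c \<rho> t)" "eval_term c \<rho> t \<in> W"
    using eval_term_iso[of s c W c' f \<rho>] eval_term_iso[of t c W c' f \<rho>] by auto
  then show ?case by (simp only: sat.simps) (simp add: F)
next
  case (Less s t)
  then have "eval_term c' (f \<circ> \<rho>) s = f (eval_term c \<rho> s)" "eval_term c \<rho> s \<in> W"
    "eval_term c' (f \<circ> \<rho>) t = f (eval_term c \<rho> t)" "eval_term c \<rho> t \<in> W"
    using eval_term_iso[of s c W c' f \<rho>] eval_term_iso[of t c W c' f \<rho>] by auto
  then show ?case by (simp only: sat.simps) (simp add: L)
next
  case (Ex n p)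
  have "sat W' F' L' c' ((f \<circ> \<rho>)(n := f v)) p \<longleftrightarrow> sat W F L c (\<rho>(n := v)) p" if "v \<in> W" for v
    unfolding fun_upd_comp[symmetric] by (rule Ex.IH) (use Ex.prems that in auto)
  then show ?case using bij_betw_imp_surj_on[OF bij] by (simp only: sat.simps bex_simps(7)) blast
next
  case (All n p)
  have "sat W' F' L' c' ((f \<circ> \<rho>)(n := f v)) p \<longleftrightarrow> sat W F L c (\<rho>(n := v)) p" if "v \<in> W" for v
    unfolding fun_upd_comp[symmetric] by (rule All.IH) (use All.prems that in auto)
  then show ?case using bij_betw_imp_surj_on[OF bij] by (simp only: sat.simps ball_simps(9)) blast
qed simp_all

lemma tau_equidistant_iso:
  assumes bij: "bij_betw f W W'"
    and F: "\<And>u v. u \<in> W \<Longrightarrow> v \<in> W \<Longrightarrow> F' (f u) (f v) \<longleftrightarrow> F u v"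
    and L: "\<And>u v. u \<in> W \<Longrightarrow> v \<in> W \<Longrightarrow> L' (f u) (f v) \<longleftrightarrow> L u v"
    and c: "\<And>k. k < 6 \<Longrightarrow> c k \<in> W \<and> c' k = f (c k)"
  shows "tau_equidistant W' F' L' c' \<longleftrightarrow> tau_equidistant W F L c"
proof -
  have "consts_of equidistance_sentence \<subseteq> {..<6}"
    using sentence6_equidistance_sentence by (simp add: sentence6_def)
  then have "sat W' F' L' c' (f \<circ> (\<lambda>_. c 0)) equidistance_sentence
      \<longleftrightarrow> sat W F L c (\<lambda>_. c 0) equidistance_sentence"
    by (intro sat_iso[where F=F and F'=F' and L=L and L'=L', OF bij F L]) (use c in auto)
  then show ?thesis by (simp add: sat_equidistance_sentence)
qed

lemma bft_transport:
  assumes bft: "bft W F L" and bij: "bij_betw f W W'"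
    and F: "\<And>u v. u \<in> W \<Longrightarrow> v \<in> W \<Longrightarrow> F' (f u) (f v) \<longleftrightarrow> F u v"
  obtains L' where "bft W' F' L'" "\<And>u v. u \<in> W \<Longrightarrow> v \<in> W \<Longrightarrow> L' (f u) (f v) \<longleftrightarrow> L u v"
proof -
  let ?g = "inv_into W f"
  define L' where "L' u v \<longleftrightarrow> u \<in> W' \<and> v \<in> W' \<and> L (?g u) (?g v)" for u v
  have W': "W' = f ` W" using bij by (simp add: bij_betw_def)
  have L': "L' (f u) (f v) \<longleftrightarrow> L u v" if "u \<in> W" "v \<in> W" for u v
    using that bij by (simp add: L'_def W' bij_betw_inv_into_left)
  have g: "?g u \<in> W" "f (?g u) = u" if "u \<in> W'" for u
    using that W' by (auto simp: inv_into_into f_inv_into_f)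
  have lo: "strict_linorder_on W L" using bft by (simp add: bft_def)
  have "strict_linorder_on W' L'"
    unfolding strict_linorder_on_def
  proof (intro conjI allI impI ballI)
    show "u \<in> W'" "v \<in> W'" if "L' u v" for u v using that by (simp_all add: L'_def)
    show "\<not> L' u u" for u
      using lo by (simp add: strict_linorder_on_def L'_def)
    show "L' u w" if "L' u v" "L' v w" for u v w
      using that lo unfolding strict_linorder_on_def L'_def by blast
    show "u = v \<or> L' u v \<or> L' v u" if "u \<in> W'" "v \<in> W'" for u v
      using that lo g[OF that(1)] g[OF that(2)] unfolding strict_linorder_on_def L'_def by metis
  qed
  moreover have "\<forall>v\<in>W'. \<forall>u\<in>W'.
        (L' u v \<and> (\<exists>w\<in>W'. F' u w \<and> \<not> L' w v)
          \<and> (\<forall>u'\<in>W'. L' u' u \<longrightarrow> \<not> (\<exists>w\<in>W'. F' u' w \<and> \<not> L' w v)))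
        \<longrightarrow> F' u v"
    using bft unfolding bft_def W' ball_simps(9) bex_simps(7)
    by (simp add: L' F cong: ball_cong bex_cong)
  ultimately have "bft W' F' L'" by (simp add: bft_def)
  then show thesis using L' by (rule that)
qed

lemma models_equidistance_sentence_iff:
  assumes "G3' V E x y z" "bft (tauV V) (tauE E x) L"
  shows "models (tauV V) (tauE E x) L (tauC x y z) equidistance_sentence
    \<longleftrightarrow> same_comp3 E x y z \<and> dist E x y = dist E x z"
  using tau_equidistant_iff[OF assms] by (simp add: models_def sat_equidistance_sentence)

lemma B_invariant_equidistance_sentence: "B_invariant equidistance_sentence"
  unfolding B_invariant_def
proof (intro allI impI)
  fix V E x y z V' E' x' y' z' L L'
  assume G: "G3' V E x y z" and G': "G3' V' E' x' y' z'"
    and L: "bft (tauV V) (tauE E x) L" and L': "bft (tauV V') (tauE E' x') L'"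
    and "iso6 (tauV V) (tauE E x) (tauC x y z) (tauV V') (tauE E' x') (tauC x' y' z')"
  then obtain f where bij: "bij_betw f (tauV V) (tauV V')"
    and F: "\<And>u v. u \<in> tauV V \<Longrightarrow> v \<in> tauV V \<Longrightarrow> tauE E' x' (f u) (f v) \<longleftrightarrow> tauE E x u v"
    and c: "\<And>k. k < 6 \<Longrightarrow> f (tauC x y z k) = tauC x' y' z' k"
    unfolding iso6_def by metis
  obtain L'' where L'': "bft (tauV V') (tauE E' x') L''"
    and L_L'': "\<And>u v. u \<in> tauV V \<Longrightarrow> v \<in> tauV V \<Longrightarrow> L'' (f u) (f v) \<longleftrightarrow> L u v"
    using bft_transport[OF L bij F] by blast
  have "tauC x y z k \<in> tauV V" for k
    using G by (simp add: G3'_def tauC_def tauV_def)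
  then have "tau_equidistant (tauV V') (tauE E' x') L'' (tauC x' y' z')
      \<longleftrightarrow> tau_equidistant (tauV V) (tauE E x) L (tauC x y z)"
    using c by (intro tau_equidistant_iso[where F="tauE E x" and F'="tauE E' x'" and L=L and L'=L'',
          OF bij F L_L'']) auto
  then show "models (tauV V) (tauE E x) L (tauC x y z) equidistance_sentence
      \<longleftrightarrow> models (tauV V') (tauE E' x') L' (tauC x' y' z') equidistance_sentence"
    using tau_equidistant_iff[OF G L] tau_equidistant_iff[OF G' L'']
      models_equidistance_sentence_iff[OF G L] models_equidistance_sentence_iff[OF G' L'] by simp
qed

lemma tau_models_B_equidistance_sentence_iff:
  assumes "G3' V E x y z"
  shows "tau_models_B V E x y z equidistance_sentence
    \<longleftrightarrow> same_comp3 E x y z \<and> dist E x y = dist E x z"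
proof -
  have "graph (tauV V) (tauE E x)" using assms by (simp add: G3'_def graph_tau)
  then obtain L where "bft (tauV V) (tauE E x) L" by (rule bft_exists)
  then show ?thesis
    unfolding tau_models_B_def using models_equidistance_sentence_iff[OF assms] by blast
qed

theorem theorem1:
  shows "\<exists>\<psi>. sentence6 \<psi> \<and> B_invariant \<psi> \<and>
    (\<forall>V E x y z. G3' V E x y z \<longrightarrow>
       ((same_comp3 E x y z \<and> dist E x y = dist E x z) \<longrightarrow> tau_models_B V E x y z \<psi>) \<and>
       ((\<not> same_comp3 E x y z \<or> \<bar>int (dist E x y) - int (dist E x z)\<bar> \<ge> 2)
          \<longrightarrow> \<not> tau_models_B V E x y z \<psi>))"
  using sentence6_equidistance_sentence B_invariant_equidistance_sentence
    tau_models_B_equidistance_sentence_iff by auto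

end
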